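(* Let $f \in \mathbb{Z}[x]$ be a tower-stable polynomial and let $b$ be an $f$-valid positive integer. Then $\lambda_f(b^{n+1})$ divides $b^n$ for every sufficiently large positive integer $n$.
   Context: For a positive integer $m$, $f_m:\mathbb{Z}/m\mathbb{Z}\to\mathbb{Z}/m\mathbb{Z}$ is the reduction of $f$, and $\lambda_f(m)$ is its period: the least common multiple over $y\in\mathbb{Z}/m\mathbb{Z}$ of the cycle length of $y$ (the least $l\ge1$ with $f_m^k(y)=f_m^{k+l}(y)$ for some $k\ge0$). $f$ is tower-stable if for every prime $p$, $f_p$ is not a cyclic permutation of $\mathbb{Z}/p\mathbb{Z}$ of length $p$. A positive integer $b$ is valid if for all primes $p,q$ with $p\mid b$ and $q\mid p-1$ we have $q\mid b$; $b$ is $f$-valid if $b$ is square-free, valid, and for all primes $p,q$ with $p\mid b$ and $q\mid\lambda_f(p)$ we have $q\mid b$. *)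

theory Defs
  imports "HOL-Computational_Algebra.Polynomial" "HOL-Computational_Algebra.Squarefree"
begin

text \<open>Reduction of f modulo m, acting on the representatives {0..<m} of Z/mZ.\<close>
definition red :: "int poly \<Rightarrow> nat \<Rightarrow> nat \<Rightarrow> nat" where
  "red f m y = nat (poly f (int y) mod int m)"

definition cyc_len :: "int poly \<Rightarrow> nat \<Rightarrow> nat \<Rightarrow> nat" where
  "cyc_len f m y = (LEAST l. l \<ge> 1 \<and> (\<exists>k. (red f m ^^ k) y = (red f m ^^ (k + l)) y))"

definition period :: "int poly \<Rightarrow> nat \<Rightarrow> nat" where
  "period f m = Lcm (cyc_len f m ` {0..<m})"

definition full_cycle :: "int poly \<Rightarrow> nat \<Rightarrow> bool" where
  "full_cycle f p \<longleftrightarrow> bij_betw (red f p) {0..<p} {0..<p} \<and>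
     (\<exists>y\<in>{0..<p}. {(red f p ^^ k) y | k. True} = {0..<p})"

definition tower_stable :: "int poly \<Rightarrow> bool" where
  "tower_stable f \<longleftrightarrow> (\<forall>p::nat. prime p \<longrightarrow> \<not> full_cycle f p)"

definition valid :: "nat \<Rightarrow> bool" where
  "valid b \<longleftrightarrow> b > 0 \<and> (\<forall>p q::nat. prime p \<longrightarrow> prime q \<longrightarrow> p dvd b \<longrightarrow> q dvd (p - 1) \<longrightarrow> q dvd b)"

definition f_valid :: "int poly \<Rightarrow> nat \<Rightarrow> bool" where
  "f_valid f b \<longleftrightarrow> squarefree b \<and> valid b \<and>
     (\<forall>p q::nat. prime p \<longrightarrow> prime q \<longrightarrow> p dvd b \<longrightarrow> q dvd period f p \<longrightarrow> q dvd b)"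

end

theory Submission
  imports Defs "HOL-Number_Theory.Number_Theory"
begin

(* For a prime p, every orbit of f is eventually periodic modulo p with period dividing lambda_f(p).
   If an orbit is eventually T-periodic modulo p^k and lambda_f(p) (p - 1) divides T, then the
   multiplier (f^T)'(x) at a point x of the cycle is a (p - 1)-th power modulo p, hence 0 or 1 by
   Fermat, and a first-order Taylor expansion of f^T around x shows that the orbit is eventually
   pT-periodic modulo p^(k+1). So lambda_f(p^(n+1)) divides lambda_f(p) (p - 1) p^n.
   Tower stability means that p does not divide lambda_f(p), since a cycle of length p modulo p
   would be a full cycle; f-validity puts every prime factor of lambda_f(p) (p - 1) into b. Hence
   lambda_f(p) (p - 1) p^n divides b^n for large n, and as b is squarefree the Chinese remainder
   theorem combines the moduli p^(n+1) into b^(n+1). *)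

lemma poly_diff_dvd: "x - y dvd poly p x - poly p y" for p :: "int poly"
proof (induction p)
  case (pCons a p)
  have "poly (pCons a p) x - poly (pCons a p) y = x * (poly p x - poly p y) + (x - y) * poly p y"
    by (simp add: algebra_simps)
  with pCons show ?case by simp
qed simp

lemma cong_poly: "[a = b] (mod m) \<Longrightarrow> [poly p a = poly p b] (mod m)" for p :: "int poly"
  by (metis cong_iff_dvd_diff dvd_trans poly_diff_dvd)

lemma cong_funpow_poly: "[a = b] (mod m) \<Longrightarrow> [(poly p ^^ j) a = (poly p ^^ j) b] (mod m)"
  for p :: "int poly"
  by (induction j) (auto intro: cong_poly)

lemma poly_taylor_remainder_dvd:
  "h\<^sup>2 dvd poly p (z + h) - poly p z - poly (pderiv p) z * h" for p :: "int poly"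
proof (induction p)
  case (pCons a p)
  have "poly (pCons a p) (z + h) - poly (pCons a p) z - poly (pderiv (pCons a p)) z * h
     = z * (poly p (z + h) - poly p z - poly (pderiv p) z * h) + h * (poly p (z + h) - poly p z)"
    by (simp add: pderiv_pCons algebra_simps)
  moreover have "h\<^sup>2 dvd h * (poly p (z + h) - poly p z)"
    using poly_diff_dvd[of "z + h" z p] by (simp add: power2_eq_square)
  ultimately show ?case
    using pCons by simp
qed simp

lemma funpow_add_apply: "(f ^^ (m + n)) x = (f ^^ m) ((f ^^ n) x)"
  by (simp add: funpow_add)

lemma funpow_red:
  assumes "m > 0" "y < m"
  shows "(red f m ^^ k) y = nat ((poly f ^^ k) (int y) mod int m)"
proof (induction k)
  case (Suc k)
  have "[(poly f ^^ k) (int y) mod int m = (poly f ^^ k) (int y)] (mod int m)"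
    by (simp add: cong_def)
  then have "poly f ((poly f ^^ k) (int y) mod int m) mod int m = poly f ((poly f ^^ k) (int y)) mod int m"
    unfolding cong_def[symmetric] by (rule cong_poly)
  with Suc assms show ?case
    by (simp add: red_def)
qed (use assms in simp)

lemma funpow_red_eq_iff:
  assumes "m > 0" "y < m"
  shows "(red f m ^^ i) y = (red f m ^^ j) y \<longleftrightarrow>
         [(poly f ^^ i) (int y) = (poly f ^^ j) (int y)] (mod int m)"
  using assms by (simp add: funpow_red cong_def nat_eq_iff2) metis

lemma funpow_red_less: "m > 0 \<Longrightarrow> y < m \<Longrightarrow> (red f m ^^ k) y < m"
  by (induction k) (simp_all add: red_def nat_less_iff)

section \<open>Eventually periodic orbits modulo m\<close>

definition eventually_periodic_mod :: "int poly \<Rightarrow> int \<Rightarrow> nat \<Rightarrow> int \<Rightarrow> bool" where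
  "eventually_periodic_mod f m T x \<longleftrightarrow> (\<exists>K. [(poly f ^^ (K + T)) x = (poly f ^^ K) x] (mod m))"

lemma periodic_mod_shift:
  fixes f :: "int poly"
  assumes "[(poly f ^^ (K + T)) x = (poly f ^^ K) x] (mod m)" "K \<le> j"
  shows "[(poly f ^^ (j + T)) x = (poly f ^^ j) x] (mod m)"
proof -
  have "(poly f ^^ (j + T)) x = (poly f ^^ (j - K)) ((poly f ^^ (K + T)) x)"
       "(poly f ^^ j) x = (poly f ^^ (j - K)) ((poly f ^^ K) x)"
    using assms(2) by (simp_all flip: funpow_add_apply)
  with cong_funpow_poly[OF assms(1)] show ?thesis
    by simp
qed

lemma periodic_mod_mult:
  fixes f :: "int poly"
  assumes "[(poly f ^^ (K + T)) x = (poly f ^^ K) x] (mod m)"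
  shows "[(poly f ^^ (K + c * T)) x = (poly f ^^ K) x] (mod m)"
proof (induction c)
  case (Suc c)
  have "[(poly f ^^ (K + c * T + T)) x = (poly f ^^ (K + c * T)) x] (mod m)"
    using assms by (rule periodic_mod_shift) simp
  with Suc show ?case
    by (simp add: ac_simps) (metis cong_trans)
qed simp

lemma eventually_periodic_mod_dvd:
  "eventually_periodic_mod f m T x \<Longrightarrow> T dvd T' \<Longrightarrow> eventually_periodic_mod f m T' x"
  unfolding eventually_periodic_mod_def by (metis dvdE mult.commute periodic_mod_mult)

lemma eventually_periodic_mod_diff:
  assumes "eventually_periodic_mod f m T x" "eventually_periodic_mod f m T' x" "T \<le> T'"
  shows "eventually_periodic_mod f m (T' - T) x"
proof -
  obtain K K' where K: "[(poly f ^^ (K + T)) x = (poly f ^^ K) x] (mod m)"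
    and K': "[(poly f ^^ (K' + T')) x = (poly f ^^ K') x] (mod m)"
    using assms(1,2) unfolding eventually_periodic_mod_def by blast
  define j where "j = K + K'"
  have "[(poly f ^^ (j + (T' - T) + T)) x = (poly f ^^ (j + (T' - T))) x] (mod m)"
    using K by (rule periodic_mod_shift) (simp add: j_def)
  moreover have "j + (T' - T) + T = j + T'"
    using assms(3) by simp
  moreover have "[(poly f ^^ (j + T')) x = (poly f ^^ j) x] (mod m)"
    using K' by (rule periodic_mod_shift) (simp add: j_def)
  ultimately show ?thesis
    unfolding eventually_periodic_mod_def by (metis cong_sym cong_trans)
qed

lemma eventually_periodic_mod_cong:
  assumes "[x = x'] (mod m)" "eventually_periodic_mod f m T x"
  shows "eventually_periodic_mod f m T x'"
  using assms cong_funpow_poly[OF assms(1)] unfolding eventually_periodic_mod_def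
  by (meson cong_sym cong_trans)

lemma eventually_periodic_mod_iff_eventually:
  "eventually_periodic_mod f m T x \<longleftrightarrow>
   (\<forall>\<^sub>F K in sequentially. [(poly f ^^ (K + T)) x = (poly f ^^ K) x] (mod m))"
proof
  assume "eventually_periodic_mod f m T x"
  then obtain K where "[(poly f ^^ (K + T)) x = (poly f ^^ K) x] (mod m)"
    unfolding eventually_periodic_mod_def by blast
  then show "\<forall>\<^sub>F K in sequentially. [(poly f ^^ (K + T)) x = (poly f ^^ K) x] (mod m)"
    unfolding eventually_sequentially by (blast intro: periodic_mod_shift)
next
  assume "\<forall>\<^sub>F K in sequentially. [(poly f ^^ (K + T)) x = (poly f ^^ K) x] (mod m)"
  then show "eventually_periodic_mod f m T x"
    unfolding eventually_periodic_mod_def eventually_sequentially by blast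
qed

section \<open>Cycle lengths and the period\<close>

lemma cyc_len_cycle:
  assumes "m > 0" "y < m"
  shows "cyc_len f m y \<ge> 1 \<and> (\<exists>k. (red f m ^^ k) y = (red f m ^^ (k + cyc_len f m y)) y)"
proof -
  have "(\<lambda>i. (red f m ^^ i) y) ` {0..m} \<subseteq> {0..<m}"
    using funpow_red_less[OF assms] by auto
  then have "\<not> inj_on (\<lambda>i. (red f m ^^ i) y) {0..m}"
    by (metis card_atLeastAtMost card_atLeastLessThan card_inj_on_le diff_zero
        finite_atLeastLessThan lessI not_le)
  then obtain i j where "i < j" "(red f m ^^ i) y = (red f m ^^ (i + (j - i))) y"
    unfolding inj_on_def by (metis le_add_diff_inverse less_imp_le linorder_neqE_nat)
  then have "\<exists>l. l \<ge> 1 \<and> (\<exists>k. (red f m ^^ k) y = (red f m ^^ (k + l)) y)"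
    by (intro exI[of _ "j - i"] conjI exI[of _ i]) auto
  then show ?thesis
    unfolding cyc_len_def by (rule LeastI_ex)
qed

lemma cyc_len_least:
  "l \<ge> 1 \<Longrightarrow> (red f m ^^ k) y = (red f m ^^ (k + l)) y \<Longrightarrow> cyc_len f m y \<le> l"
  unfolding cyc_len_def by (rule Least_le) blast

lemma eventually_periodic_mod_iff_cyc_len_dvd:
  assumes "m > 0" "y < m"
  shows "eventually_periodic_mod f (int m) T (int y) \<longleftrightarrow> cyc_len f m y dvd T"
proof
  define l where "l = cyc_len f m y"
  have l: "l \<ge> 1" "eventually_periodic_mod f (int m) l (int y)"
    using cyc_len_cycle[OF assms, of f] funpow_red_eq_iff[OF assms]
    unfolding l_def eventually_periodic_mod_def by metis+
  show "l dvd T" if "eventually_periodic_mod f (int m) T (int y)"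
  proof (rule ccontr)
    assume "\<not> l dvd T"
    then have "0 < T mod l" "T mod l < l"
      using l(1) by (simp_all add: mod_greater_zero_iff_not_dvd)
    have "eventually_periodic_mod f (int m) (T div l * l) (int y)"
      using l(2) by (rule eventually_periodic_mod_dvd) simp
    then have "eventually_periodic_mod f (int m) (T - T div l * l) (int y)"
      using that by (rule eventually_periodic_mod_diff) simp
    then obtain k where "(red f m ^^ k) y = (red f m ^^ (k + T mod l)) y"
      unfolding eventually_periodic_mod_def funpow_red_eq_iff[OF assms, symmetric]
      by (metis minus_div_mult_eq_mod)
    then have "l \<le> T mod l"
      using cyc_len_least \<open>0 < T mod l\<close> l_def by (metis Suc_leI One_nat_def)
    with \<open>T mod l < l\<close> show False
      by simp
  qed
  show "eventually_periodic_mod f (int m) T (int y)" if "l dvd T"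
    using l(2) that by (rule eventually_periodic_mod_dvd)
qed

lemma period_pos:
  assumes "m > 0"
  shows "period f m > 0"
proof -
  have "0 \<notin> cyc_len f m ` {0..<m}"
    using cyc_len_cycle[OF assms, of _ f] by (metis atLeastLessThan_iff imageE not_one_le_zero)
  then show ?thesis
    unfolding period_def by (metis Lcm_0_iff_nat finite_atLeastLessThan finite_imageI gr0I)
qed

lemma eventually_periodic_mod_iff_period_dvd:
  assumes "m > 0"
  shows "(\<forall>x. eventually_periodic_mod f (int m) T x) \<longleftrightarrow> period f m dvd T"
proof
  assume all: "\<forall>x. eventually_periodic_mod f (int m) T x"
  have "cyc_len f m y dvd T" if "y < m" for y
    using all eventually_periodic_mod_iff_cyc_len_dvd[OF assms that] by blast
  then show "period f m dvd T"
    unfolding period_def by (auto intro!: Lcm_least)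
next
  assume "period f m dvd T"
  show "\<forall>x. eventually_periodic_mod f (int m) T x"
  proof
    fix x
    define y where "y = nat (x mod int m)"
    have y: "y < m" "[int y = x] (mod int m)"
      using assms by (auto simp: y_def nat_less_iff cong_def)
    have "cyc_len f m y dvd period f m"
      unfolding period_def using y(1) by (intro dvd_Lcm) simp
    with \<open>period f m dvd T\<close> have "eventually_periodic_mod f (int m) T (int y)"
      using eventually_periodic_mod_iff_cyc_len_dvd[OF assms y(1)] dvd_trans by blast
    with y(2) show "eventually_periodic_mod f (int m) T x"
      by (rule eventually_periodic_mod_cong)
  qed
qed

lemma eventually_periodic_mod_period: "m > 0 \<Longrightarrow> eventually_periodic_mod f (int m) (period f m) x"
  using eventually_periodic_mod_iff_period_dvd[of m f "period f m"] by simp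

section \<open>Tower stability\<close>

lemma inj_on_cycle:
  assumes "(red f m ^^ k) y = (red f m ^^ (k + cyc_len f m y)) y"
  shows "inj_on (\<lambda>i. (red f m ^^ (k + i)) y) {0..<cyc_len f m y}"
proof (rule ccontr)
  assume "\<not> ?thesis"
  then obtain i j where ij: "i < j" "j < cyc_len f m y" "(red f m ^^ (k + i)) y = (red f m ^^ (k + j)) y"
    unfolding inj_on_def by (metis atLeastLessThan_iff linorder_neqE_nat)
  then have "(red f m ^^ (k + i)) y = (red f m ^^ ((k + i) + (j - i))) y"
    by simp
  then have "cyc_len f m y \<le> j - i"
    using ij(1) cyc_len_least[where l = "j - i" and k = "k + i"] by simp
  with ij(1,2) show False
    by simp
qed

lemma cyc_len_le:
  assumes "m > 0" "y < m"
  shows "cyc_len f m y \<le> m"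
proof -
  obtain k where k: "(red f m ^^ k) y = (red f m ^^ (k + cyc_len f m y)) y"
    using cyc_len_cycle[OF assms] by blast
  have "(\<lambda>i. (red f m ^^ (k + i)) y) ` {0..<cyc_len f m y} \<subseteq> {0..<m}"
    using funpow_red_less[OF assms] by auto
  with inj_on_cycle[OF k] show ?thesis
    by (metis card_atLeastLessThan card_inj_on_le diff_zero finite_atLeastLessThan)
qed

lemma full_cycle_if_orbit_covers:
  assumes "m > 0" "x < m" and ret: "(red f m ^^ m) x = x"
    and orbit: "(\<lambda>i. (red f m ^^ i) x) ` {0..<m} = {0..<m}"
  shows "full_cycle f m"
proof -
  have onto: "{0..<m} \<subseteq> red f m ` {0..<m}"
  proof
    fix z assume "z \<in> {0..<m}"
    then obtain i where "z = (red f m ^^ i) x"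
      using orbit by force
    also have "\<dots> = (red f m ^^ (i + m)) x"
      by (simp add: funpow_add_apply ret)
    also have "\<dots> = (red f m ^^ Suc (i + m - 1)) x"
      using assms(1) by simp
    also have "\<dots> = red f m ((red f m ^^ (i + m - 1)) x)"
      by simp
    finally show "z \<in> red f m ` {0..<m}"
      using funpow_red_less[OF assms(1,2)] by auto
  qed
  have into: "red f m ` {0..<m} \<subseteq> {0..<m}"
    using funpow_red_less[OF assms(1), where k = 1] by (simp add: image_subset_iff)
  have "bij_betw (red f m) {0..<m} {0..<m}"
    unfolding bij_betw_def using finite_surj_inj[OF _ onto] into onto by auto
  moreover have "{(red f m ^^ k) x | k. True} = {0..<m}"
  proof
    show "{(red f m ^^ k) x | k. True} \<subseteq> {0..<m}"
      using funpow_red_less[OF assms(1,2)] by auto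
    show "{0..<m} \<subseteq> {(red f m ^^ k) x | k. True}"
      using orbit by blast
  qed
  ultimately show ?thesis
    unfolding full_cycle_def using assms(2) by (intro conjI bexI[of _ x]) simp_all
qed

lemma full_cycle_if_cyc_len_eq:
  assumes "m > 0" "y < m" and l: "cyc_len f m y = m"
  shows "full_cycle f m"
proof -
  obtain k where k: "(red f m ^^ k) y = (red f m ^^ (k + cyc_len f m y)) y"
    using cyc_len_cycle[OF assms(1,2), of f] by blast
  define x where "x = (red f m ^^ k) y"
  have shift: "(red f m ^^ (k + i)) y = (red f m ^^ i) x" for i
    unfolding x_def funpow_add_apply[symmetric] by (simp add: add.commute)
  have x: "x < m" "(red f m ^^ m) x = x"
    using funpow_red_less[OF assms(1,2)] shift[of m] k by (simp_all add: x_def l)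
  have "(\<lambda>i. (red f m ^^ i) x) ` {0..<m} = {0..<m}"
  proof (rule card_subset_eq)
    show "(\<lambda>i. (red f m ^^ i) x) ` {0..<m} \<subseteq> {0..<m}"
      using funpow_red_less[OF assms(1) x(1)] by auto
    have "inj_on (\<lambda>i. (red f m ^^ i) x) {0..<m}"
      using inj_on_cycle[OF k] by (simp add: l shift)
    then show "card ((\<lambda>i. (red f m ^^ i) x) ` {0..<m}) = card {0..<m}"
      by (rule card_image)
  qed simp
  with assms(1) x show ?thesis
    by (rule full_cycle_if_orbit_covers)
qed

lemma tower_stable_prime_not_dvd_period:
  assumes "tower_stable f" "prime p"
  shows "\<not> p dvd period f p"
proof
  assume "p dvd period f p"
  moreover have "period f p dvd (\<Prod>y<p. cyc_len f p y)"
    unfolding period_def by (auto intro!: Lcm_least dvd_prodI)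
  ultimately have "p dvd (\<Prod>y<p. cyc_len f p y)"
    by (rule dvd_trans)
  then obtain y where y: "y < p" "p dvd cyc_len f p y"
    using assms(2) by (auto simp: prime_dvd_prod_iff)
  have "p > 0"
    using assms(2) prime_gt_0_nat by blast
  then have "cyc_len f p y = p"
    using cyc_len_le[OF _ y(1)] cyc_len_cycle[OF _ y(1)] y(2)
    by (metis dvd_imp_le le_antisym not_one_le_zero neq0_conv)
  with \<open>p > 0\<close> y(1) have "full_cycle f p"
    by (rule full_cycle_if_cyc_len_eq)
  with assms show False
    unfolding tower_stable_def by blast
qed

section \<open>Lifting periods to prime powers\<close>

text \<open>\<^term>\<open>iter_deriv f i x\<close> is the derivative of the \<open>i\<close>-th iterate of \<open>f\<close> at \<open>x\<close>, by the chain rule.\<close>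

primrec iter_deriv :: "int poly \<Rightarrow> nat \<Rightarrow> int \<Rightarrow> int" where
  "iter_deriv f 0 x = 1"
| "iter_deriv f (Suc i) x = iter_deriv f i x * poly (pderiv f) ((poly f ^^ i) x)"

lemma iter_deriv_add:
  "iter_deriv f (i + j) x = iter_deriv f i x * iter_deriv f j ((poly f ^^ i) x)"
  by (induction j) (simp_all add: funpow_add_apply[symmetric] add.commute)

lemma cong_iter_deriv: "[a = b] (mod m) \<Longrightarrow> [iter_deriv f i a = iter_deriv f i b] (mod m)"
  by (induction i) (auto intro!: cong_mult cong_poly cong_funpow_poly)

lemma iter_deriv_taylor:
  assumes "q dvd h" "q dvd M" "M dvd q\<^sup>2"
  shows "M dvd (poly f ^^ i) (x + h) - (poly f ^^ i) x - iter_deriv f i x * h"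
proof (induction i)
  case (Suc i)
  define z where "z = (poly f ^^ i) x"
  define h' where "h' = (poly f ^^ i) (x + h) - z"
  have "q dvd h' - iter_deriv f i x * h"
    using Suc assms(2) unfolding h'_def z_def by (metis diff_diff_eq dvd_trans)
  moreover have "q dvd iter_deriv f i x * h"
    using assms(1) by simp
  ultimately have "q dvd h'"
    by (metis diff_add_cancel dvd_add)
  then have "M dvd poly f (z + h') - poly f z - poly (pderiv f) z * h'"
    using poly_taylor_remainder_dvd[of h' f z] assms(3) by (meson dvd_trans dvd_power_same)
  moreover have "M dvd poly (pderiv f) z * (h' - iter_deriv f i x * h)"
    using Suc unfolding h'_def z_def by (simp add: diff_diff_eq)
  moreover have "(poly f ^^ Suc i) (x + h) - (poly f ^^ Suc i) x - iter_deriv f (Suc i) x * h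
     = (poly f (z + h') - poly f z - poly (pderiv f) z * h') + poly (pderiv f) z * (h' - iter_deriv f i x * h)"
    by (simp add: z_def h'_def algebra_simps)
  ultimately show ?case
    by simp
qed simp

lemma fermat_theorem_int:
  assumes "prime p" "\<not> int p dvd a"
  shows "[a ^ (p - 1) = 1] (mod int p)"
proof -
  have "[nat (a mod int p) ^ (p - 1) = 1] (mod p)"
    using assms by (intro fermat_theorem) (auto simp flip: int_dvd_int_iff simp: dvd_mod_iff prime_gt_0_nat)
  then have "[(a mod int p) ^ (p - 1) = 1] (mod int p)"
    using assms(1) by (simp add: cong_int_iff[symmetric] prime_gt_0_nat)
  then show ?thesis
    by (metis cong_def power_mod)
qed

lemma purely_periodic_mod:
  fixes f :: "int poly"
  assumes "eventually_periodic_mod f m L x" "[(poly f ^^ T) x = x] (mod m)" "T > 0"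
  shows "[(poly f ^^ (i + L)) x = (poly f ^^ i) x] (mod m)"
proof -
  obtain K where K: "[(poly f ^^ (K + L)) x = (poly f ^^ K) x] (mod m)"
    using assms(1) unfolding eventually_periodic_mod_def by blast
  have "[(poly f ^^ (0 + K * T)) x = (poly f ^^ 0) x] (mod m)"
    using assms(2) by (intro periodic_mod_mult) simp
  then have ret: "[x = (poly f ^^ (K * T)) x] (mod m)"
    by (simp add: cong_sym)
  have "K \<le> i + K * T"
    using assms(3) by (simp add: trans_le_add2)
  have "[(poly f ^^ (i + L)) x = (poly f ^^ (i + L)) ((poly f ^^ (K * T)) x)] (mod m)"
    using ret by (rule cong_funpow_poly)
  also have "(poly f ^^ (i + L)) ((poly f ^^ (K * T)) x) = (poly f ^^ (i + K * T + L)) x"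
    by (simp flip: funpow_add_apply add: ac_simps)
  also have "[\<dots> = (poly f ^^ (i + K * T)) x] (mod m)"
    using K \<open>K \<le> i + K * T\<close> by (rule periodic_mod_shift)
  also have "(poly f ^^ (i + K * T)) x = (poly f ^^ i) ((poly f ^^ (K * T)) x)"
    by (simp add: funpow_add_apply)
  also have "[\<dots> = (poly f ^^ i) x] (mod m)"
    using ret by (intro cong_funpow_poly) (rule cong_sym)
  finally show ?thesis .
qed

lemma iter_deriv_mult_period:
  assumes "\<And>i. [(poly f ^^ (i + L)) x = (poly f ^^ i) x] (mod m)"
  shows "[iter_deriv f (c * L) x = iter_deriv f L x ^ c] (mod m)"
proof (induction c)
  case (Suc c)
  have "[(poly f ^^ (0 + c * L)) x = (poly f ^^ 0) x] (mod m)"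
    using assms[of 0] by (intro periodic_mod_mult) simp
  then have "[iter_deriv f L ((poly f ^^ (c * L)) x) = iter_deriv f L x] (mod m)"
    by (simp add: cong_iter_deriv)
  with Suc have "[iter_deriv f (c * L) x * iter_deriv f L ((poly f ^^ (c * L)) x)
      = iter_deriv f L x ^ c * iter_deriv f L x] (mod m)"
    by (rule cong_mult)
  moreover have "iter_deriv f (Suc c * L) x = iter_deriv f (c * L) x * iter_deriv f L ((poly f ^^ (c * L)) x)"
    using iter_deriv_add[of f "c * L" L x] by (simp add: add.commute)
  ultimately show ?case
    by (simp add: mult.commute)
qed simp

lemma iter_deriv_cong_0_or_1:
  assumes p: "prime p" and per: "eventually_periodic_mod f (int p) L x"
    and ret: "[(poly f ^^ T) x = x] (mod int p)" and T: "L * (p - 1) dvd T" "T > 0"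
  shows "[iter_deriv f T x = 0] (mod int p) \<or> [iter_deriv f T x = 1] (mod int p)"
proof -
  obtain j where "T = L * (p - 1) * j"
    using T(1) by (rule dvdE)
  then have j: "T = (p - 1) * j * L" "j > 0"
    using T(2) by (simp_all add: ac_simps)
  have "p > 1"
    using p prime_gt_1_nat by blast
  define A where "A = iter_deriv f L x"
  have "[iter_deriv f T x = A ^ ((p - 1) * j)] (mod int p)"
    unfolding j(1) A_def using purely_periodic_mod[OF per ret \<open>T > 0\<close>]
    by (rule iter_deriv_mult_period)
  moreover have "[A ^ ((p - 1) * j) = 0] (mod int p) \<or> [A ^ ((p - 1) * j) = 1] (mod int p)"
  proof (cases "int p dvd A")
    case True
    have "(p - 1) * j > 0"
      using \<open>p > 1\<close> j(2) by simp
    with True have "int p dvd A ^ ((p - 1) * j)"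
      by (simp add: dvd_power dvd_trans)
    then show ?thesis
      by (simp add: cong_0_iff)
  next
    case False
    then have "[(A ^ (p - 1)) ^ j = 1 ^ j] (mod int p)"
      using fermat_theorem_int[OF p] by (intro cong_pow)
    then show ?thesis
      by (simp add: power_mult)
  qed
  ultimately show ?thesis
    using cong_trans by blast
qed

lemma lift_return_multiplier_0:
  assumes ret: "[(poly f ^^ T) x = x] (mod q)" and "r dvd q" "[iter_deriv f T x = 0] (mod r)"
  shows "[(poly f ^^ (T + T)) x = (poly f ^^ T) x] (mod q * r)"
proof -
  define w where "w = (poly f ^^ T) x"
  have "q * r dvd (poly f ^^ T) w - (poly f ^^ T) x - iter_deriv f T x * (w - x)"
    using iter_deriv_taylor[of q "w - x" "q * r" T f x] ret \<open>r dvd q\<close>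
    by (simp add: w_def cong_iff_dvd_diff power2_eq_square)
  moreover have "q * r dvd iter_deriv f T x * (w - x)"
    using ret assms(3) mult_dvd_mono[of r "iter_deriv f T x" q "w - x"]
    by (simp add: w_def cong_iff_dvd_diff cong_0_iff mult.commute)
  ultimately have "q * r dvd ((poly f ^^ T) w - (poly f ^^ T) x - iter_deriv f T x * (w - x))
      + iter_deriv f T x * (w - x)"
    by (rule dvd_add)
  then have "q * r dvd (poly f ^^ T) w - (poly f ^^ T) x"
    by simp
  then show ?thesis
    by (simp add: w_def cong_iff_dvd_diff funpow_add_apply)
qed

lemma lift_return_multiplier_1:
  assumes ret: "[(poly f ^^ T) x = x] (mod q)" and "int r dvd q" "[iter_deriv f T x = 1] (mod int r)"
  shows "[(poly f ^^ (r * T)) x = x] (mod q * int r)"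
proof -
  define c where "c = (poly f ^^ T) x - x"
  have "q dvd c"
    using ret by (simp add: c_def cong_iff_dvd_diff)
  have drift: "q * int r dvd (poly f ^^ (j * T)) x - (x + int j * c)" for j
  proof (induction j)
    case (Suc j)
    define w where "w = (poly f ^^ (j * T)) x"
    have "q dvd w - (x + int j * c)"
      using Suc w_def dvd_mult_left by blast
    then have "q dvd w - (x + int j * c) + int j * c"
      using \<open>q dvd c\<close> by (intro dvd_add dvd_mult)
    then have "q dvd w - x"
      by simp
    then have "q * int r dvd (poly f ^^ T) w - (poly f ^^ T) x - iter_deriv f T x * (w - x)"
      using iter_deriv_taylor[of q "w - x" "q * int r" T f x] \<open>int r dvd q\<close>
      by (simp add: power2_eq_square)
    moreover have "q * int r dvd iter_deriv f T x * (w - x - int j * c)"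
      using Suc w_def by (simp add: diff_diff_eq)
    moreover have "q * int r dvd (iter_deriv f T x - 1) * (int j * c)"
      using assms(3) \<open>q dvd c\<close> mult_dvd_mono[of "int r" "iter_deriv f T x - 1" q "int j * c"]
      by (simp add: cong_iff_dvd_diff mult.commute)
    moreover have expand: "(poly f ^^ (Suc j * T)) x - (x + int (Suc j) * c) =
        ((poly f ^^ T) w - (poly f ^^ T) x - iter_deriv f T x * (w - x))
        + iter_deriv f T x * (w - x - int j * c) + (iter_deriv f T x - 1) * (int j * c)"
      by (simp add: w_def c_def funpow_add_apply algebra_simps)
    ultimately show ?case
      unfolding expand by (intro dvd_add)
  qed simp
  have "q * int r dvd int r * c"
    using \<open>q dvd c\<close> by (simp add: mult.commute)
  with drift[of r] have "q * int r dvd (poly f ^^ (r * T)) x - (x + int r * c) + int r * c"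
    by (rule dvd_add)
  then show ?thesis
    by (simp add: cong_iff_dvd_diff)
qed

lemma eventually_periodic_mod_lift:
  assumes p: "prime p" and "k \<ge> 1" and T: "period f p * (p - 1) dvd T" "T > 0"
    and per: "eventually_periodic_mod f (int p ^ k) T z"
  shows "eventually_periodic_mod f (int p ^ Suc k) (T * p) z"
proof -
  obtain K where K: "[(poly f ^^ (K + T)) z = (poly f ^^ K) z] (mod int p ^ k)"
    using per unfolding eventually_periodic_mod_def by blast
  define x where "x = (poly f ^^ K) z"
  have orbit: "(poly f ^^ (j + K)) z = (poly f ^^ j) x" for j
    by (simp add: x_def funpow_add_apply)
  have ret: "[(poly f ^^ T) x = x] (mod int p ^ k)"
    using K orbit[of T] by (simp add: add.commute flip: x_def)
  have "int p dvd int p ^ k"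
    using \<open>k \<ge> 1\<close> by (simp add: dvd_power)
  with ret have ret_p: "[(poly f ^^ T) x = x] (mod int p)"
    by (rule cong_dvd_modulus)
  have "p > 0"
    using p prime_gt_0_nat by blast
  then have "eventually_periodic_mod f (int p) (period f p) x"
    by (rule eventually_periodic_mod_period)
  then have "[iter_deriv f T x = 0] (mod int p) \<or> [iter_deriv f T x = 1] (mod int p)"
    using iter_deriv_cong_0_or_1[OF p _ ret_p T] by blast
  then show ?thesis
  proof
    assume "[iter_deriv f T x = 0] (mod int p)"
    then have "[(poly f ^^ (T + T)) x = (poly f ^^ T) x] (mod int p ^ Suc k)"
      using lift_return_multiplier_0[OF ret \<open>int p dvd int p ^ k\<close>] by (simp add: mult.commute)
    then have "[(poly f ^^ ((T + K) + T)) z = (poly f ^^ (T + K)) z] (mod int p ^ Suc k)"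
      using orbit[of "T + T"] orbit[of T] by (simp add: ac_simps)
    then have "eventually_periodic_mod f (int p ^ Suc k) T z"
      unfolding eventually_periodic_mod_def by blast
    then show ?thesis
      by (rule eventually_periodic_mod_dvd) simp
  next
    assume "[iter_deriv f T x = 1] (mod int p)"
    then have "[(poly f ^^ (p * T)) x = x] (mod int p ^ Suc k)"
      using lift_return_multiplier_1[OF ret \<open>int p dvd int p ^ k\<close>] by (simp add: mult.commute)
    then have "[(poly f ^^ (K + T * p)) z = (poly f ^^ K) z] (mod int p ^ Suc k)"
      using orbit[of "p * T"] by (simp add: ac_simps flip: x_def)
    then show ?thesis
      unfolding eventually_periodic_mod_def by blast
  qed
qed

lemma eventually_periodic_mod_prime_power:
  assumes "prime p"
  shows "eventually_periodic_mod f (int p ^ Suc n) (period f p * (p - 1) * p ^ n) z"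
proof (induction n)
  case 0
  have "p > 0"
    using assms prime_gt_0_nat by blast
  then have "eventually_periodic_mod f (int p) (period f p) z"
    by (rule eventually_periodic_mod_period)
  then have "eventually_periodic_mod f (int p) (period f p * (p - 1)) z"
    by (rule eventually_periodic_mod_dvd) simp
  then show ?case
    by simp
next
  case (Suc n)
  have "period f p * (p - 1) * p ^ n > 0"
    using assms period_pos[of p f] prime_gt_1_nat[OF assms] by simp
  with Suc have "eventually_periodic_mod f (int p ^ Suc (Suc n)) (period f p * (p - 1) * p ^ n * p) z"
    by (intro eventually_periodic_mod_lift[OF assms]) simp_all
  then show ?case
    by (simp add: ac_simps)
qed

section \<open>Assembling the prime factors of b\<close>

lemma squarefree_prod_prime_factors:
  assumes "squarefree (b :: nat)"
  shows "(\<Prod>p\<in>prime_factors b. p) = b"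
proof -
  have "b > 0"
    using assms by (intro gr0I) simp
  have "(\<Prod>p\<in>prime_factors b. p) = (\<Prod>p\<in>prime_factors b. p ^ multiplicity p b)"
    using assms squarefree_factorial_semiring'[of b] \<open>b > 0\<close> by (intro prod.cong) auto
  also have "\<dots> = b"
    using prime_factorization_nat[OF \<open>b > 0\<close>] by simp
  finally show ?thesis .
qed

lemma eventually_periodic_mod_squarefree_power:
  assumes "squarefree b" and per: "\<And>p. p \<in> prime_factors b \<Longrightarrow> eventually_periodic_mod f (int p ^ k) T x"
  shows "eventually_periodic_mod f (int b ^ k) T x"
proof -
  have "\<forall>\<^sub>F K in sequentially. \<forall>p\<in>prime_factors b.
          [(poly f ^^ (K + T)) x = (poly f ^^ K) x] (mod int p ^ k)"
    using per by (intro eventually_ball_finite ballI) (simp_all flip: eventually_periodic_mod_iff_eventually)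
  then obtain K where K: "\<forall>p\<in>prime_factors b. [(poly f ^^ (K + T)) x = (poly f ^^ K) x] (mod int p ^ k)"
    unfolding eventually_sequentially by blast
  have "coprime (int p ^ k) (int q ^ k)" if "p \<in> prime_factors b" "q \<in> prime_factors b" "p \<noteq> q" for p q
    using that by (simp add: in_prime_factors_iff primes_coprime)
  with K have "[(poly f ^^ (K + T)) x = (poly f ^^ K) x] (mod \<Prod>p\<in>prime_factors b. int p ^ k)"
    by (intro cong_cong_prod_coprime) blast+
  also have "(\<Prod>p\<in>prime_factors b. int p ^ k) = int (\<Prod>p\<in>prime_factors b. p) ^ k"
    by (simp add: prod_power_distrib)
  also have "\<dots> = int b ^ k"
    by (simp add: squarefree_prod_prime_factors[OF assms(1)])
  finally show ?thesis
    unfolding eventually_periodic_mod_def by blast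
qed

lemma dvd_power_if_prime_divisors_dvd:
  fixes b c :: nat
  assumes "c > 0" and prime_divisors: "\<And>q. prime q \<Longrightarrow> q dvd c \<Longrightarrow> q dvd b"
  shows "c dvd b ^ c"
proof (cases "b = 0")
  case b: False
  show ?thesis
  proof (rule multiplicity_le_imp_dvd)
    fix q :: nat
    assume q: "prime q"
    show "multiplicity q c \<le> multiplicity q (b ^ c)"
    proof (cases "q dvd c")
      case True
      have "multiplicity q c < 2 ^ multiplicity q c"
        by (rule less_exp)
      also have "\<dots> \<le> q ^ multiplicity q c"
        using prime_ge_2_nat[OF q] by (rule power_mono) simp
      also have "\<dots> \<le> c"
        using \<open>c > 0\<close> by (intro dvd_imp_le multiplicity_dvd)
      also have "multiplicity q b > 0"
        using q b prime_divisors[OF q True] by (simp add: prime_multiplicity_gt_zero_iff)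
      then have "c \<le> c * multiplicity q b"
        by simp
      also have "\<dots> = multiplicity q (b ^ c)"
        using q b by (simp add: prime_elem_multiplicity_power_distrib prime_imp_prime_elem)
      finally show ?thesis
        by simp
    qed (simp add: not_dvd_imp_multiplicity_0)
  qed (use \<open>c > 0\<close> in simp)
qed (use assms(1) in \<open>simp add: zero_power\<close>)

lemma tower_stable_coprime_period:
  assumes "tower_stable f" "prime p"
  shows "coprime p (period f p * (p - 1))"
proof -
  have "0 < p - 1" "p - 1 < p"
    using prime_gt_1_nat[OF assms(2)] by simp_all
  then have "\<not> p dvd p - 1"
    by (rule nat_dvd_not_less)
  with tower_stable_prime_not_dvd_period[OF assms] show ?thesis
    using assms(2) by (simp add: prime_imp_coprime prime_dvd_mult_iff)
qed

lemma f_valid_period_dvd_power: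
  assumes "tower_stable f" "f_valid f b"
  shows "\<exists>N. \<forall>n\<ge>N. \<forall>p\<in>prime_factors b. period f p * (p - 1) * p ^ n dvd b ^ n"
proof -
  define C where "C = (\<Prod>p\<in>prime_factors b. period f p * (p - 1))"
  have "C > 0"
    unfolding C_def using period_pos prime_gt_1_nat by (intro prod_pos) (auto simp: in_prime_factors_iff)
  have "C dvd b ^ C"
  proof (rule dvd_power_if_prime_divisors_dvd[OF \<open>C > 0\<close>])
    fix q :: nat assume q: "prime q" "q dvd C"
    then obtain p where "p \<in> prime_factors b" "q dvd period f p \<or> q dvd p - 1"
      unfolding C_def by (auto simp: prime_dvd_prod_iff prime_dvd_mult_iff)
    with q(1) assms(2) show "q dvd b"
      unfolding f_valid_def valid_def in_prime_factors_iff by blast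
  qed
  have "period f p * (p - 1) * p ^ n dvd b ^ n" if "C \<le> n" "p \<in> prime_factors b" for n p
  proof -
    have "period f p * (p - 1) dvd C"
      unfolding C_def using that(2) by (intro dvd_prodI) simp_all
    also have "C dvd b ^ n"
      using \<open>C dvd b ^ C\<close> le_imp_power_dvd[OF that(1)] by (rule dvd_trans)
    finally have "period f p * (p - 1) dvd b ^ n" .
    moreover have "p ^ n dvd b ^ n"
      using that(2) by (simp add: dvd_power_same in_prime_factors_iff)
    moreover have "coprime (period f p * (p - 1)) (p ^ n)"
      using tower_stable_coprime_period[OF assms(1)] that(2)
      by (simp add: in_prime_factors_iff coprime_commute)
    ultimately show ?thesis
      by (rule divides_mult)
  qed
  then show ?thesis
    by blast
qed

theorem proposition4p5:
  fixes f :: "int poly" and b :: nat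
  assumes "tower_stable f" and "b > 0" and "f_valid f b"
  shows "\<exists>N. \<forall>n\<ge>N. period f (b ^ (n + 1)) dvd b ^ n"
proof -
  obtain N where N: "\<And>n p. n \<ge> N \<Longrightarrow> p \<in> prime_factors b \<Longrightarrow> period f p * (p - 1) * p ^ n dvd b ^ n"
    using f_valid_period_dvd_power[OF assms(1,3)] by blast
  have "period f (b ^ (n + 1)) dvd b ^ n" if "n \<ge> N" for n
  proof -
    have "eventually_periodic_mod f (int b ^ (n + 1)) (b ^ n) x" for x
    proof (rule eventually_periodic_mod_squarefree_power)
      show "squarefree b"
        using assms(3) by (simp add: f_valid_def)
      fix p assume p: "p \<in> prime_factors b"
      then have "eventually_periodic_mod f (int p ^ Suc n) (period f p * (p - 1) * p ^ n) x"
        by (intro eventually_periodic_mod_prime_power) (simp add: in_prime_factors_iff)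
      then show "eventually_periodic_mod f (int p ^ (n + 1)) (b ^ n) x"
        using N[OF that p] by (simp add: eventually_periodic_mod_dvd)
    qed
    then show ?thesis
      using eventually_periodic_mod_iff_period_dvd[of "b ^ (n + 1)" f "b ^ n"] assms(2) by simp
  qed
  then show ?thesis
    by blast
qed

end
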